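(* Let $S$ be a finite symmetric generating set of $\mathbb{Z}$ and $(X_n)_{n\ge0}$ the lazy random walk on $\mathrm{Cay}(\mathbb{Z},S)$. Then there exists a constant $C>0$ such that for all $m\ge1$, $$\sup_{n\ge0}\mathbb{P}\big(X_n\in m\mathbb{Z}\setminus\{0\}\big)\le\frac{C}{\sqrt m}.$$ In particular, there exists $c>0$ such that for all $k\ge2$, $$\sup_{n\ge0}\mathbb{P}\big(X_n\in\Lambda_k(\mathbb{Z})\setminus\{0\}\big)\le e^{-ck}.$$
   Context: The lazy random walk on $\mathrm{Cay}(\mathbb{Z},S)$ starts at $X_0=0$ and at each step stays put with probability $1/2$ and otherwise adds a uniformly chosen element of $S$. $\Lambda_k(\mathbb{Z})$ denotes the intersection of all (normal) subgroups of $\mathbb{Z}$ of index at most $k$. *)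

theory Defs
  imports "HOL-Probability.Probability"
begin

definition int_subgroup :: "int set \<Rightarrow> bool" where
  "int_subgroup H \<longleftrightarrow> 0 \<in> H \<and> (\<forall>x\<in>H. \<forall>y\<in>H. x + y \<in> H) \<and> (\<forall>x\<in>H. - x \<in> H)"

definition int_cosets :: "int set \<Rightarrow> int set set" where
  "int_cosets H = (\<lambda>x. (\<lambda>h. x + h) ` H) ` UNIV"

definition int_generates :: "int set \<Rightarrow> bool" where
  "int_generates S \<longleftrightarrow> (\<forall>H. int_subgroup H \<and> S \<subseteq> H \<longrightarrow> H = UNIV)"

definition Lambda_int :: "nat \<Rightarrow> int set" where
  "Lambda_int k = \<Inter> {H. int_subgroup H \<and> finite (int_cosets H) \<and> card (int_cosets H) \<le> k}"

definition lazy_step :: "int set \<Rightarrow> int pmf" where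
  "lazy_step S = bind_pmf (bernoulli_pmf (1/2))
      (\<lambda>b. if b then return_pmf 0 else pmf_of_set S)"

fun lazy_walk :: "int set \<Rightarrow> nat \<Rightarrow> int pmf" where
  "lazy_walk S 0 = return_pmf 0"
| "lazy_walk S (Suc n) = bind_pmf (lazy_walk S n) (\<lambda>x. map_pmf (\<lambda>s. x + s) (lazy_step S))"

end

theory Submission
  imports Defs
begin

text \<open>
  Write \<open>p\<^sub>n\<close> for the distribution of \<open>X\<^sub>n\<close> and let \<open>M\<close> bound \<open>\<bar>s\<bar>\<close> on \<open>S\<close>.
  The energy \<open>E\<^sub>n = \<Sum>\<^sub>x p\<^sub>n(x)\<^sup>2\<close> drops at each step by a multiple of the Dirichlet form
  \<open>D\<^sub>n = \<Sum>\<^sub>x (p\<^sub>n(x) - p\<^sub>n(x + s))\<^sup>2\<close>, and a discrete Nash inequality \<open>p\<^sub>n(x)\<^sup>4 \<le> 4 D\<^sub>n E\<^sub>n\<close>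
  turns this into \<open>E\<^sub>n\<^sub>+\<^sub>1 \<le> E\<^sub>n - c E\<^sub>n\<^sup>3\<close>, so \<open>E\<^sub>n = O(n\<^sup>-\<^sup>1\<^sup>/\<^sup>2)\<close>. Averaging \<open>D\<close> over
  \<open>[A, 2A)\<close> yields a time \<open>a\<close> with \<open>max p\<^sub>a = O(A\<^sup>-\<^sup>1\<^sup>/\<^sup>2)\<close>. For \<open>A \<approx> m / 4M\<close> the support
  of \<open>X\<^sub>a\<close> meets every coset of \<open>m\<int>\<close> at most once, and since the walk averages translates,
  the largest coset probability never increases afterwards; before time \<open>a\<close> the walk cannot
  reach \<open>m\<int> - {0}\<close> at all.

  For the second bound, \<open>\<Lambda>\<^sub>k(\<int>) \<subseteq> lcm(1,\<dots>,k)\<int>\<close> and \<open>lcm(1,\<dots>,k) \<ge> 2\<^sup>k\<^sup>-\<^sup>1\<close>; bounded \<open>k\<close>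
  are handled by the parity bound \<open>P(X\<^sub>n \<in> 2\<int> - {0}) \<le> 1 - 1/(2|S|)\<close>, which uses an odd
  generator.
\<close>

section \<open>The one-step distribution\<close>

lemma measure_bind_pmf:
  "measure_pmf.prob (bind_pmf M f) A = (\<integral>x. measure_pmf.prob (f x) A \<partial>measure_pmf M)"
  unfolding measure_pmf_bind
  by (subst measure_pmf.measure_bind[where N="count_space UNIV"])
     (auto simp: measurable_def space_subprob_algebra measure_pmf.subprob_space_axioms)

lemma measure_pmf_prob_le_1_minus_pmf:
  assumes "z \<notin> A"
  shows "measure_pmf.prob M A \<le> 1 - pmf M z"
proof -
  have "measure_pmf.prob M A + pmf M z = measure_pmf.prob M (A \<union> {z})"
    using assms by (subst measure_pmf.finite_measure_Union) (auto simp: measure_pmf_single)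
  also have "\<dots> \<le> 1" by (rule measure_pmf.prob_le_1)
  finally show ?thesis by simp
qed

lemma pmf_lazy_step:
  assumes "finite S" "S \<noteq> {}"
  shows "pmf (lazy_step S) x = (if x = 0 then 1/2 else 0) + (if x \<in> S then 1 / (2 * card S) else 0)"
  using assms unfolding lazy_step_def
  by (simp add: pmf_bind integral_measure_pmf_real[where A=UNIV] UNIV_bool pmf_of_set)

lemma set_pmf_lazy_step:
  assumes "finite S" "S \<noteq> {}"
  shows "set_pmf (lazy_step S) \<subseteq> insert 0 S"
  using pmf_lazy_step[OF assms] by (auto simp: set_pmf_iff split: if_splits)

lemma integral_lazy_step:
  fixes g :: "int \<Rightarrow> real"
  assumes "finite S" "S \<noteq> {}"
  shows "(\<integral>s. g s \<partial>measure_pmf (lazy_step S)) = g 0 / 2 + (\<Sum>s\<in>S. g s) / (2 * card S)"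
proof -
  have "(\<integral>s. g s \<partial>measure_pmf (lazy_step S)) = (\<Sum>a\<in>insert 0 S. g a * pmf (lazy_step S) a)"
    using assms set_pmf_lazy_step[OF assms] by (intro integral_measure_pmf_real) auto
  also have "\<dots> = (\<Sum>a\<in>insert 0 S. g a * (if a = 0 then 1/2 else 0))
                  + (\<Sum>a\<in>insert 0 S. g a * (if a \<in> S then 1 / (2 * card S) else 0))"
    using assms by (simp add: pmf_lazy_step distrib_left sum.distrib)
  also have "(\<Sum>a\<in>insert 0 S. g a * (if a = 0 then 1/2 else 0)) = g 0 / 2"
    using assms by (simp add: if_distrib cong: if_cong)
  also have "(\<Sum>a\<in>insert 0 S. g a * (if a \<in> S then 1 / (2 * card S) else 0)) = (\<Sum>a\<in>S. g a * (1 / (2 * card S)))"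
    using assms by (intro sum.mono_neutral_cong_right) auto
  also have "\<dots> = (\<Sum>a\<in>S. g a) / (2 * card S)"
    by (simp add: sum_divide_distrib)
  finally show ?thesis .
qed

lemma sq_lazy_average_le:
  fixes u :: real and v :: "'a \<Rightarrow> real"
  assumes "finite S" "S \<noteq> {}"
  shows "(u / 2 + sum v S / (2 * real (card S))) ^ 2
           \<le> u ^ 2 / 4 + u * sum v S / (2 * real (card S)) + (\<Sum>s\<in>S. v s ^ 2) / (4 * real (card S))"
proof -
  define \<sigma> where "\<sigma> = real (card S)"
  have "\<sigma> > 0"
    using assms by (simp add: \<sigma>_def card_gt_0_iff)
  have "sum v S ^ 2 \<le> \<sigma> * (\<Sum>s\<in>S. v s ^ 2)"
    using Cauchy_Schwarz_ineq_sum[of v "\<lambda>_. 1" S] by (simp add: \<sigma>_def mult.commute)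
  then have "sum v S ^ 2 / (4 * \<sigma> ^ 2) \<le> (\<Sum>s\<in>S. v s ^ 2) / (4 * \<sigma>)"
    using \<open>\<sigma> > 0\<close> by (simp add: field_simps power2_eq_square)
  then show ?thesis
    using \<open>\<sigma> > 0\<close> by (simp add: field_simps power2_eq_square flip: \<sigma>_def)
qed

lemma lazy_walk_1: "lazy_walk S 1 = lazy_step S"
  by (simp add: bind_return_pmf pmf.map_ident_strong)

lemma lazy_walk_Suc_step_first:
  "lazy_walk S (Suc n) = bind_pmf (lazy_step S) (\<lambda>s. map_pmf (\<lambda>x. x + s) (lazy_walk S n))"
  by (simp add: map_pmf_def bind_return_pmf bind_commute_pmf[of "lazy_walk S n"] bind_assoc_pmf add.commute)

declare lazy_walk.simps(2) [simp del]

section \<open>Walks with bounded steps\<close>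

locale bounded_lazy_walk =
  fixes S :: "int set" and M :: int
  assumes finite_S: "finite S" and S_nonempty: "S \<noteq> {}" and abs_le_M: "\<And>s. s \<in> S \<Longrightarrow> \<bar>s\<bar> \<le> M"
begin

abbreviation p :: "nat \<Rightarrow> int \<Rightarrow> real" where "p n x \<equiv> pmf (lazy_walk S n) x"

definition window :: "nat \<Rightarrow> int set" where "window n = {-(int n * M)..int n * M}"

lemma card_S_ge_1: "real (card S) \<ge> 1"
  using finite_S S_nonempty by (simp add: Suc_leI card_gt_0_iff)

lemma M_nonneg: "M \<ge> 0"
  using S_nonempty abs_le_M by force

lemma pmf_lazy_walk_Suc: "p (Suc n) y = p n y / 2 + (\<Sum>s\<in>S. p n (y - s)) / (2 * card S)"
proof -
  have "pmf (map_pmf (\<lambda>x. x + s) (lazy_walk S n)) y = p n (y - s)" for s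
    using pmf_map_inj'[of "\<lambda>x. x + s" "lazy_walk S n" "y - s"] by (simp add: inj_on_def)
  then show ?thesis
    unfolding lazy_walk_Suc_step_first pmf_bind by (simp add: integral_lazy_step[OF finite_S S_nonempty])
qed

lemma prob_lazy_walk_Suc:
  "measure_pmf.prob (lazy_walk S (Suc n)) T = measure_pmf.prob (lazy_walk S n) T / 2
     + (\<Sum>s\<in>S. measure_pmf.prob (lazy_walk S n) {x. x + s \<in> T}) / (2 * card S)"
  unfolding lazy_walk_Suc_step_first measure_bind_pmf
  by (simp add: integral_lazy_step[OF finite_S S_nonempty] vimage_def)

lemma set_pmf_lazy_walk: "set_pmf (lazy_walk S n) \<subseteq> window n"
proof (induction n)
  case (Suc n)
  have "x + s \<in> window (Suc n)" if "x \<in> window n" "s \<in> insert 0 S" for x s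
    using that abs_le_M M_nonneg by (force simp: window_def algebra_simps)
  then show ?case
    using Suc set_pmf_lazy_step[OF finite_S S_nonempty]
    unfolding lazy_walk_Suc_step_first set_bind_pmf set_map_pmf by blast
qed (simp add: window_def)

lemma pmf_lazy_walk_eq_0: "x \<notin> window n \<Longrightarrow> p n x = 0"
  using set_pmf_lazy_walk[of n] by (auto simp: set_pmf_iff)

lemma sum_window_pmf: "(\<Sum>x\<in>window n. p n x) = 1"
  using set_pmf_lazy_walk[of n] by (intro sum_pmf_eq_1) (auto simp: window_def)

lemma prob_lazy_walk_eq_sum: "measure_pmf.prob (lazy_walk S n) T = (\<Sum>x\<in>T \<inter> window n. p n x)"
proof -
  have "measure_pmf.prob (lazy_walk S n) T = measure_pmf.prob (lazy_walk S n) (T \<inter> window n)"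
    using set_pmf_lazy_walk[of n] by (intro measure_prob_cong_0) (auto simp: set_pmf_iff)
  then show ?thesis by (simp add: measure_measure_pmf_finite window_def)
qed

lemma prob_nonzero_multiple_eq_0:
  assumes "int n * M < L"
  shows "measure_pmf.prob (lazy_walk S n) {x. L dvd x \<and> x \<noteq> 0} = 0"
proof -
  have "x \<notin> window n" if "L dvd x" "x \<noteq> 0" for x
  proof -
    have "\<bar>L\<bar> \<le> \<bar>x\<bar>" using that by (rule dvd_imp_le_int[rotated])
    then show ?thesis using assms by (auto simp: window_def)
  qed
  then have "{x. L dvd x \<and> x \<noteq> 0} \<inter> window n = {}"
    by blast
  then show ?thesis by (simp add: prob_lazy_walk_eq_sum)
qed

text \<open>The walk at time \<open>a + k\<close> is a mixture of translates of the walk at time \<open>a\<close>.\<close>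

lemma prob_translate_lazy_walk_le:
  assumes "\<And>y. measure_pmf.prob (lazy_walk S a) {x. x - y \<in> T} \<le> G"
  shows "measure_pmf.prob (lazy_walk S (a + k)) {x. x - y \<in> T} \<le> G"
proof (induction k arbitrary: y)
  case (Suc k)
  define q where "q T' = measure_pmf.prob (lazy_walk S (a + k)) T'" for T'
  have "{x. x + s \<in> {x. x - y \<in> T}} = {x. x - (y - s) \<in> T}" for s
    by (simp add: algebra_simps)
  then have sum_le: "(\<Sum>s\<in>S. q {x. x + s \<in> {x. x - y \<in> T}}) \<le> card S * G"
    using sum_mono[of S _ "\<lambda>_. G"] Suc by (simp add: q_def)
  have stay_le: "card S * q {x. x - y \<in> T} \<le> card S * G"
    using Suc by (simp add: q_def mult_left_mono)
  have "card S * (2 * measure_pmf.prob (lazy_walk S (a + Suc k)) {x. x - y \<in> T})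
          = card S * q {x. x - y \<in> T} + (\<Sum>s\<in>S. q {x. x + s \<in> {x. x - y \<in> T}})"
    using prob_lazy_walk_Suc[of "a + k" "{x. x - y \<in> T}"] card_S_ge_1
    by (simp add: q_def field_simps del: mem_Collect_eq)
  also have "\<dots> \<le> card S * (2 * G)"
    using sum_le stay_le by linarith
  finally show ?case
    using card_S_ge_1 by simp
qed (use assms in simp)

lemma prob_coset_le_pmf_bound:
  assumes "2 * int a * M < L" and "\<And>x. p a x \<le> B" and "B \<ge> 0"
  shows "measure_pmf.prob (lazy_walk S a) {x. L dvd x - y} \<le> B"
proof -
  define hits where "hits = {x. L dvd x - y} \<inter> window a"
  have "u = v" if "u \<in> hits" "v \<in> hits" for u v
  proof (rule ccontr)
    assume "u \<noteq> v"
    have "L dvd (u - y) - (v - y)" by (rule dvd_diff) (use that in \<open>auto simp: hits_def\<close>)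
    then have "\<bar>L\<bar> \<le> \<bar>u - v\<bar>" using \<open>u \<noteq> v\<close> by (intro dvd_imp_le_int) auto
    then show False using that assms(1) by (auto simp: hits_def window_def)
  qed
  then have "hits = {} \<or> (\<exists>u. hits = {u})" by blast
  moreover have "measure_pmf.prob (lazy_walk S a) {x. L dvd x - y} = (\<Sum>x\<in>hits. p a x)"
    unfolding hits_def by (rule prob_lazy_walk_eq_sum)
  ultimately show ?thesis
    using assms(2,3) by auto
qed

lemma prob_nonzero_multiple_le_pmf_bound:
  assumes "2 * int a * M < L" and "\<And>x. p a x \<le> B" and "B \<ge> 0"
  shows "measure_pmf.prob (lazy_walk S n) {x. L dvd x \<and> x \<noteq> 0} \<le> B"
proof (cases "n < a")
  case True
  then have "int n * M \<le> int a * M"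
    using M_nonneg by (intro mult_right_mono) auto
  moreover have "0 \<le> int a * M"
    using M_nonneg by simp
  ultimately have "int n * M < L"
    using assms(1) by linarith
  then show ?thesis
    using assms(3) by (simp add: prob_nonzero_multiple_eq_0)
next
  case False
  then obtain k where n: "n = a + k"
    using le_Suc_ex not_less by blast
  have "measure_pmf.prob (lazy_walk S a) {x. x - y \<in> {z. L dvd z}} \<le> B" for y
    using prob_coset_le_pmf_bound[OF assms] by simp
  then have "measure_pmf.prob (lazy_walk S n) {x. x - 0 \<in> {z. L dvd z}} \<le> B"
    unfolding n by (rule prob_translate_lazy_walk_le)
  moreover have "measure_pmf.prob (lazy_walk S n) {x. L dvd x \<and> x \<noteq> 0}
                   \<le> measure_pmf.prob (lazy_walk S n) {x. x - 0 \<in> {z. L dvd z}}"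
    by (intro measure_pmf.finite_measure_mono) auto
  ultimately show ?thesis
    by linarith
qed

lemma prob_nonzero_even_le:
  assumes "s\<^sub>1 \<in> S" "odd s\<^sub>1"
  shows "measure_pmf.prob (lazy_walk S n) {x. even x \<and> x \<noteq> 0} \<le> 1 - 1 / (2 * card S)"
proof (cases n)
  case 0
  then show ?thesis using card_S_ge_1 by (simp add: lazy_walk.simps)
next
  case (Suc k)
  text \<open>Every coset of \<open>2\<int>\<close> misses \<open>0\<close> or \<open>s\<^sub>1\<close>, which both carry mass at time 1.\<close>
  have pmf_1: "p 1 x = (if x = 0 then 1/2 else 0) + (if x \<in> S then 1 / (2 * card S) else 0)" for x
    unfolding lazy_walk_1 by (rule pmf_lazy_step[OF finite_S S_nonempty])
  have "measure_pmf.prob (lazy_walk S 1) {x. x - y \<in> {x. even x}} \<le> 1 - 1 / (2 * card S)" for y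
  proof (cases "even y")
    case True
    then have "s\<^sub>1 \<notin> {x. x - y \<in> {x. even x}}" using assms(2) by auto
    then have "measure_pmf.prob (lazy_walk S 1) {x. x - y \<in> {x. even x}} \<le> 1 - p 1 s\<^sub>1"
      by (rule measure_pmf_prob_le_1_minus_pmf)
    moreover have "p 1 s\<^sub>1 \<ge> 1 / (2 * card S)"
      using assms pmf_1[of s\<^sub>1] by auto
    ultimately show ?thesis by linarith
  next
    case False
    then have "0 \<notin> {x. x - y \<in> {x. even x}}" by auto
    then have "measure_pmf.prob (lazy_walk S 1) {x. x - y \<in> {x. even x}} \<le> 1 - p 1 0"
      by (rule measure_pmf_prob_le_1_minus_pmf)
    moreover have "1 / (2 * card S) \<le> p 1 0"
      using card_S_ge_1 pmf_1[of 0] by (simp add: field_simps)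
    ultimately show ?thesis by linarith
  qed
  then have "measure_pmf.prob (lazy_walk S (1 + k)) {x. x - 0 \<in> {x. even x}}
               \<le> 1 - 1 / (2 * card S)"
    by (rule prob_translate_lazy_walk_le)
  moreover have "measure_pmf.prob (lazy_walk S n) {x. even x \<and> x \<noteq> 0}
                   \<le> measure_pmf.prob (lazy_walk S n) {x. x - 0 \<in> {x. even x}}"
    by (intro measure_pmf.finite_measure_mono) auto
  ultimately show ?thesis
    using Suc by simp
qed

end

section \<open>Decay of the energy\<close>

lemma cubic_recursion_decay:
  fixes e :: "nat \<Rightarrow> real"
  assumes e_nonneg: "\<And>n. e n \<ge> 0" and "e 0 \<le> 1" and "0 \<le> c" "c \<le> 1"
    and e_Suc: "\<And>n. e (Suc n) \<le> e n - c * e n ^ 3"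
  shows "e n ^ 2 * (1 + 2 * c * n) \<le> 1"
proof (induction n)
  case 0
  then show ?case using assms(1,2) by (simp add: power_le_one)
next
  case (Suc n)
  have e_le_1: "e k \<le> 1" for k
  proof (induction k)
    case (Suc k)
    have "0 \<le> c * e k ^ 3"
      using e_nonneg[of k] \<open>0 \<le> c\<close> by simp
    then show ?case
      using Suc e_Suc[of k] by linarith
  qed (rule assms(2))
  define x where "x = c * e n ^ 2"
  have x: "0 \<le> x" "x \<le> 1"
    using assms(3,4) e_nonneg[of n] e_le_1[of n] by (auto simp: x_def power_le_one intro: mult_le_one)
  have "e (Suc n) \<le> e n * (1 - x)"
    using e_Suc[of n] by (simp add: x_def power3_eq_cube power2_eq_square algebra_simps)
  then have "e (Suc n) ^ 2 \<le> e n ^ 2 * (1 - x) ^ 2"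
    using e_nonneg[of "Suc n"] by (metis power_mono power_mult_distrib)
  then have "e (Suc n) ^ 2 * (1 + 2 * c * Suc n) \<le> e n ^ 2 * (1 - x) ^ 2 * (1 + 2 * c * Suc n)"
    using assms(3) by (intro mult_right_mono) auto
  also have "\<dots> = (1 - x) ^ 2 * (e n ^ 2 * (1 + 2 * c * n)) + (1 - x) ^ 2 * (2 * x)"
    by (simp add: x_def algebra_simps)
  also have "\<dots> \<le> (1 - x) ^ 2 * 1 + (1 - x) ^ 2 * (2 * x)"
    using Suc by (intro add_right_mono mult_left_mono) auto
  also have "\<dots> = 1 - x ^ 2 * (3 - 2 * x)"
    by (simp add: power2_eq_square algebra_simps)
  also have "\<dots> \<le> 1"
    using x by simp
  finally show ?case .
qed

lemma exists_le_average:
  fixes f :: "'a \<Rightarrow> real"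
  assumes "finite I" "I \<noteq> {}"
  shows "\<exists>i\<in>I. f i \<le> sum f I / card I"
proof (rule ccontr)
  assume "\<not> ?thesis"
  then have "(\<Sum>i\<in>I. sum f I / card I) < sum f I"
    using assms by (intro sum_strict_mono) auto
  then show False using assms by simp
qed

lemma exists_nat_multiples_bracket:
  fixes M m :: int
  assumes "1 \<le> M" "4 * M \<le> m"
  shows "\<exists>A::nat. 1 \<le> A \<and> 4 * M * int A \<le> m \<and> m \<le> 8 * M * int A"
proof -
  define A where "A = nat (m div (4 * M))"
  have "int A = m div (4 * M)"
    using assms by (simp add: A_def pos_imp_zdiv_nonneg_iff)
  then have "m = 4 * M * int A + m mod (4 * M)"
    by simp
  then have A: "4 * M * int A \<le> m" "m < 4 * M * int A + 4 * M"
    using assms(1) pos_mod_bound[of "4 * M" m] pos_mod_sign[of "4 * M" m] by linarith+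
  have "A \<ge> 1"
    using A(2) assms(2) by (cases A) auto
  moreover have "M \<le> M * int A"
    using assms(1) \<open>A \<ge> 1\<close> by simp
  then have "m \<le> 8 * M * int A"
    using A(2) by linarith
  ultimately show ?thesis
    using A(1) by blast
qed

locale nontrivial_bounded_lazy_walk = bounded_lazy_walk +
  fixes s\<^sub>0 :: int
  assumes s\<^sub>0_pos: "0 < s\<^sub>0" and minus_s\<^sub>0_in_S: "- s\<^sub>0 \<in> S"
begin

lemma s\<^sub>0_le_M: "s\<^sub>0 \<le> M"
  using abs_le_M[OF minus_s\<^sub>0_in_S] by simp

lemma M_ge_1: "M \<ge> 1"
  using s\<^sub>0_pos s\<^sub>0_le_M by simp

text \<open>As \<open>p n\<close> vanishes outside \<open>window n\<close>, both sums below are really sums over all of \<open>\<int>\<close>.\<close>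

definition energy :: "nat \<Rightarrow> real" where
  "energy n = (\<Sum>x\<in>window n. p n x ^ 2)"

definition dirichlet :: "nat \<Rightarrow> real" where
  "dirichlet n = (\<Sum>x\<in>window (Suc n). (p n x - p n (x + s\<^sub>0)) ^ 2)"

lemma energy_nonneg: "energy n \<ge> 0"
  by (simp add: energy_def sum_nonneg)

lemma dirichlet_nonneg: "dirichlet n \<ge> 0"
  by (simp add: dirichlet_def sum_nonneg)

lemma sum_window_Suc_shift_sq:
  assumes "\<bar>t\<bar> \<le> M"
  shows "(\<Sum>x\<in>window (Suc n). p n (x + t) ^ 2) = energy n"
proof -
  have "(\<Sum>x\<in>window (Suc n). p n (x + t) ^ 2) = (\<Sum>x\<in>{-(int n * M + M) + t..int n * M + M + t}. p n x ^ 2)"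
    by (rule sum.reindex_bij_witness[of _ "\<lambda>x. x - t" "\<lambda>x. x + t"]) (auto simp: window_def algebra_simps)
  also have "\<dots> = energy n"
    unfolding energy_def using assms
    by (intro sum.mono_neutral_right) (auto simp: window_def pmf_lazy_walk_eq_0)
  finally show ?thesis .
qed

lemma sum_window_mult_shift:
  assumes "\<bar>t\<bar> \<le> M"
  shows "(\<Sum>x\<in>window (Suc n). p n x * p n (x - t))
           = energy n - (\<Sum>x\<in>window (Suc n). (p n x - p n (x - t)) ^ 2) / 2"
proof -
  have "(\<Sum>x\<in>window (Suc n). (p n x - p n (x - t)) ^ 2)
          = (\<Sum>x\<in>window (Suc n). p n (x + 0) ^ 2) + (\<Sum>x\<in>window (Suc n). p n (x + - t) ^ 2)
            - 2 * (\<Sum>x\<in>window (Suc n). p n x * p n (x - t))"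
    by (simp add: power2_diff sum.distrib sum_subtractf sum_distrib_left mult.assoc)
  also have "\<dots> = 2 * energy n - 2 * (\<Sum>x\<in>window (Suc n). p n x * p n (x - t))"
    using sum_window_Suc_shift_sq[of 0 n] sum_window_Suc_shift_sq[of "- t" n] assms M_nonneg by simp
  finally show ?thesis
    by linarith
qed

lemma energy_Suc_le: "energy (Suc n) \<le> energy n - dirichlet n / (4 * card S)"
proof -
  define \<sigma> where "\<sigma> = real (card S)"
  define V where "V = window (Suc n)"
  define T where "T = (\<Sum>s\<in>S. \<Sum>x\<in>V. (p n x - p n (x - s)) ^ 2)"
  have "\<sigma> > 0"
    using card_S_ge_1 by (simp add: \<sigma>_def)
  have "energy (Suc n) = (\<Sum>x\<in>V. (p n x / 2 + (\<Sum>s\<in>S. p n (x - s)) / (2 * \<sigma>)) ^ 2)"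
    by (simp add: energy_def V_def pmf_lazy_walk_Suc \<sigma>_def)
  also have "\<dots> \<le> (\<Sum>x\<in>V. p n x ^ 2 / 4 + p n x * (\<Sum>s\<in>S. p n (x - s)) / (2 * \<sigma>)
                              + (\<Sum>s\<in>S. p n (x - s) ^ 2) / (4 * \<sigma>))"
    unfolding \<sigma>_def by (intro sum_mono sq_lazy_average_le finite_S S_nonempty)
  also have "\<dots> = (\<Sum>x\<in>V. p n x ^ 2) / 4 + (\<Sum>s\<in>S. \<Sum>x\<in>V. p n x * p n (x - s)) / (2 * \<sigma>)
                  + (\<Sum>s\<in>S. \<Sum>x\<in>V. p n (x - s) ^ 2) / (4 * \<sigma>)"
    by (simp add: sum.distrib sum_distrib_left sum_divide_distrib[symmetric] sum.swap[of _ V S])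
  also have "(\<Sum>x\<in>V. p n x ^ 2) = energy n"
    using sum_window_Suc_shift_sq[of 0 n] M_nonneg by (simp add: V_def)
  also have "(\<Sum>s\<in>S. \<Sum>x\<in>V. p n (x - s) ^ 2) = \<sigma> * energy n"
    using sum_window_Suc_shift_sq[of "- _" n] abs_le_M by (simp add: V_def \<sigma>_def)
  also have "(\<Sum>s\<in>S. \<Sum>x\<in>V. p n x * p n (x - s)) = \<sigma> * energy n - T / 2"
    using sum_window_mult_shift abs_le_M
    by (simp add: V_def T_def \<sigma>_def sum_subtractf sum_divide_distrib)
  also have "energy n / 4 + (\<sigma> * energy n - T / 2) / (2 * \<sigma>) + \<sigma> * energy n / (4 * \<sigma>)
               = energy n - T / (4 * \<sigma>)"
    using \<open>\<sigma> > 0\<close> by (simp add: field_simps)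
  also have "\<dots> \<le> energy n - dirichlet n / (4 * \<sigma>)"
  proof -
    have "dirichlet n = (\<Sum>x\<in>V. (p n x - p n (x - (- s\<^sub>0))) ^ 2)"
      by (simp add: dirichlet_def V_def)
    also have "\<dots> \<le> T"
      unfolding T_def by (rule member_le_sum[OF minus_s\<^sub>0_in_S]) (auto intro: sum_nonneg finite_S)
    finally show ?thesis
      using \<open>\<sigma> > 0\<close> by (simp add: divide_right_mono)
  qed
  finally show ?thesis
    by (simp add: \<sigma>_def)
qed

lemma decseq_energy: "decseq energy"
proof (rule decseq_SucI)
  fix n
  have "dirichlet n / (4 * card S) \<ge> 0"
    using dirichlet_nonneg[of n] by simp
  then show "energy (Suc n) \<le> energy n"
    using energy_Suc_le[of n] by linarith
qed

lemma energy_0: "energy 0 = 1"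
  by (simp add: energy_def window_def lazy_walk.simps)

lemma sum_dirichlet_le: "(\<Sum>a\<in>{A..<A + k}. dirichlet a) \<le> 4 * card S * (energy A - energy (A + k))"
proof (induction k)
  case (Suc k)
  have "dirichlet (A + k) \<le> 4 * card S * (energy (A + k) - energy (A + Suc k))"
    using energy_Suc_le[of "A + k"] card_S_ge_1 by (simp add: field_simps)
  then show ?case using Suc by (simp add: algebra_simps)
qed simp

text \<open>Telescoping \<open>p(z)\<^sup>2 - p(z + s\<^sub>0)\<^sup>2\<close> from \<open>x\<close> up to the right end of the support.\<close>

lemma sq_pmf_le_sum_abs_diff: "p n x ^ 2 \<le> (\<Sum>z\<in>{x..int n * M}. \<bar>p n z ^ 2 - p n (z + s\<^sub>0) ^ 2\<bar>)"
proof (induction "nat (int n * M + 1 - x)" arbitrary: x rule: less_induct)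
  case less
  show ?case
  proof (cases "x > int n * M")
    case True
    then show ?thesis by (simp add: pmf_lazy_walk_eq_0 window_def)
  next
    case False
    define g where "g z = \<bar>p n z ^ 2 - p n (z + s\<^sub>0) ^ 2\<bar>" for z
    have "p n (x + s\<^sub>0) ^ 2 \<le> (\<Sum>z\<in>{x + s\<^sub>0..int n * M}. g z)"
      unfolding g_def using False s\<^sub>0_pos by (intro less) auto
    also have "\<dots> \<le> (\<Sum>z\<in>{x<..int n * M}. g z)"
      using s\<^sub>0_pos by (intro sum_mono2) (auto simp: g_def)
    finally have "p n x ^ 2 \<le> g x + (\<Sum>z\<in>{x<..int n * M}. g z)"
      unfolding g_def by linarith
    also have "\<dots> = (\<Sum>z\<in>{x..int n * M}. g z)"
    proof -
      have "{x..int n * M} = insert x {x<..int n * M}" using False by auto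
      then show ?thesis by simp
    qed
    finally show ?thesis by (simp add: g_def)
  qed
qed

text \<open>Discrete Nash inequality: factor \<open>p(z)\<^sup>2 - p(z + s\<^sub>0)\<^sup>2\<close> and apply Cauchy--Schwarz.\<close>

lemma pmf_pow4_le: "p n x ^ 4 \<le> 4 * dirichlet n * energy n"
proof (cases "x \<in> window n")
  case False
  then show ?thesis using dirichlet_nonneg energy_nonneg by (simp add: pmf_lazy_walk_eq_0)
next
  case True
  define V where "V = window (Suc n)"
  define a where "a z = p n z - p n (z + s\<^sub>0)" for z
  define b where "b z = p n z + p n (z + s\<^sub>0)" for z
  have "p n x ^ 2 \<le> (\<Sum>z\<in>{x..int n * M}. \<bar>p n z ^ 2 - p n (z + s\<^sub>0) ^ 2\<bar>)"
    by (rule sq_pmf_le_sum_abs_diff)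
  also have "\<dots> \<le> (\<Sum>z\<in>V. \<bar>p n z ^ 2 - p n (z + s\<^sub>0) ^ 2\<bar>)"
    using True M_nonneg by (intro sum_mono2) (auto simp: V_def window_def algebra_simps)
  also have "\<dots> = (\<Sum>z\<in>V. \<bar>a z\<bar> * \<bar>b z\<bar>)"
  proof -
    have "a z * b z = p n z ^ 2 - p n (z + s\<^sub>0) ^ 2" for z
      by (simp add: a_def b_def power2_eq_square algebra_simps)
    then show ?thesis by (simp flip: abs_mult)
  qed
  finally have "(p n x ^ 2) ^ 2 \<le> (\<Sum>z\<in>V. \<bar>a z\<bar> * \<bar>b z\<bar>) ^ 2"
    by (intro power_mono) auto
  also have "\<dots> \<le> (\<Sum>z\<in>V. \<bar>a z\<bar> ^ 2) * (\<Sum>z\<in>V. \<bar>b z\<bar> ^ 2)"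
    by (rule Cauchy_Schwarz_ineq_sum)
  also have "(\<Sum>z\<in>V. \<bar>a z\<bar> ^ 2) = dirichlet n"
    by (simp add: dirichlet_def V_def a_def)
  also have "(\<Sum>z\<in>V. \<bar>b z\<bar> ^ 2) \<le> (\<Sum>z\<in>V. 2 * p n z ^ 2 + 2 * p n (z + s\<^sub>0) ^ 2)"
  proof (intro sum_mono)
    fix z
    have "0 \<le> (p n z - p n (z + s\<^sub>0)) ^ 2" by simp
    then show "\<bar>b z\<bar> ^ 2 \<le> 2 * p n z ^ 2 + 2 * p n (z + s\<^sub>0) ^ 2"
      by (simp add: b_def power2_eq_square algebra_simps)
  qed
  also have "\<dots> = 4 * energy n"
    using sum_window_Suc_shift_sq[of 0 n] sum_window_Suc_shift_sq[of s\<^sub>0 n] s\<^sub>0_pos s\<^sub>0_le_M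
    by (simp add: sum.distrib sum_distrib_left[symmetric] V_def)
  finally show ?thesis
    using dirichlet_nonneg[of n] by (simp add: power_mult[symmetric] mult_left_mono mult.assoc)
qed

lemma energy_cube_le: "energy n ^ 3 \<le> 4 * dirichlet n"
proof -
  have fin: "finite (p n ` window n)" "p n ` window n \<noteq> {}"
    using M_nonneg by (auto simp: window_def)
  obtain x\<^sub>0 where x\<^sub>0: "p n x\<^sub>0 = Max (p n ` window n)"
    using Max_in[OF fin] by auto
  have "energy n \<le> (\<Sum>x\<in>window n. p n x * p n x\<^sub>0)"
    unfolding energy_def power2_eq_square x\<^sub>0 using fin by (intro sum_mono mult_left_mono) auto
  also have "\<dots> = p n x\<^sub>0"
    using sum_window_pmf[of n] by (simp flip: sum_distrib_right)
  finally have "energy n ^ 4 \<le> p n x\<^sub>0 ^ 4"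
    using energy_nonneg by (intro power_mono) auto
  also have "\<dots> \<le> 4 * dirichlet n * energy n"
    by (rule pmf_pow4_le)
  finally have "energy n * energy n ^ 3 \<le> energy n * (4 * dirichlet n)"
    by (simp add: eval_nat_numeral algebra_simps)
  then show ?thesis
    using energy_nonneg[of n] dirichlet_nonneg[of n]
    by (cases "energy n = 0") (simp_all add: mult_le_cancel_left_pos)
qed

lemma energy_sq_le:
  assumes "n \<ge> 1"
  shows "energy n ^ 2 \<le> 8 * card S / n"
proof -
  define c where "c = real (card S)"
  have "energy (Suc k) \<le> energy k - 1 / (16 * c) * energy k ^ 3" for k
  proof -
    have "1 / (16 * c) * energy k ^ 3 \<le> dirichlet k / (4 * c)"
      using energy_cube_le[of k] card_S_ge_1 by (simp add: c_def field_simps)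
    then show ?thesis
      using energy_Suc_le[of k] by (simp add: c_def)
  qed
  then have "energy n ^ 2 * (1 + 2 * (1 / (16 * c)) * n) \<le> 1"
    using energy_nonneg energy_0 card_S_ge_1 by (intro cubic_recursion_decay) (auto simp: c_def)
  moreover have "energy n ^ 2 * (n / (8 * c)) \<le> energy n ^ 2 * (1 + 2 * (1 / (16 * c)) * n)"
    by (intro mult_left_mono) auto
  ultimately have "energy n ^ 2 * (n / (8 * c)) \<le> 1"
    by linarith
  then show ?thesis
    using assms card_S_ge_1 by (simp add: c_def field_simps)
qed

lemma exists_time_dirichlet_le:
  assumes "A \<ge> 1"
  shows "\<exists>a\<in>{A..<2 * A}. dirichlet a \<le> 4 * card S * energy A / A"
proof -
  obtain a where a: "a \<in> {A..<A + A}" "dirichlet a \<le> (\<Sum>a\<in>{A..<A + A}. dirichlet a) / A"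
    using exists_le_average[of "{A..<A + A}" dirichlet] assms by auto
  have "(\<Sum>a\<in>{A..<A + A}. dirichlet a) \<le> 4 * card S * (energy A - energy (A + A))"
    by (rule sum_dirichlet_le)
  also have "\<dots> \<le> 4 * card S * energy A"
    using energy_nonneg[of "A + A"] by (intro mult_left_mono) auto
  finally have "(\<Sum>a\<in>{A..<A + A}. dirichlet a) / A \<le> 4 * card S * energy A / A"
    by (rule divide_right_mono) simp
  then show ?thesis
    using a by (intro bexI[of _ a]) auto
qed

text \<open>At a time where the Dirichlet form is at most its average over \<open>[A, 2A)\<close>, the distribution is flat.\<close>

lemma exists_time_pmf_le:
  assumes "A \<ge> 1"
  shows "\<exists>a. A \<le> a \<and> a < 2 * A \<and> (\<forall>x. p a x \<le> 4 * sqrt (real (card S) / A))"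
proof -
  define c where "c = real (card S)"
  have A_pos: "real A > 0" and c_pos: "c > 0"
    using assms card_S_ge_1 by (auto simp: c_def)
  obtain a where a: "a \<in> {A..<2 * A}" "dirichlet a \<le> 4 * c * energy A / A"
    using exists_time_dirichlet_le[OF assms] by (auto simp: c_def)
  have energy_a: "energy a \<le> energy A"
    using a(1) by (intro decseqD[OF decseq_energy]) auto
  have "p a x \<le> 4 * sqrt (c / A)" for x
  proof -
    have "p a x ^ 4 \<le> 4 * dirichlet a * energy a"
      by (rule pmf_pow4_le)
    also have "\<dots> \<le> 4 * (4 * c * energy A / A) * energy A"
      using a(2) energy_a dirichlet_nonneg[of a] energy_nonneg[of a]
      by (intro mult_mono) auto
    also have "\<dots> = 16 * c / A * energy A ^ 2"
      by (simp add: power2_eq_square)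
    also have "\<dots> \<le> 16 * c / A * (8 * c / A)"
      using energy_sq_le[OF assms] A_pos c_pos by (intro mult_left_mono) (auto simp: c_def)
    also have "\<dots> = 128 * (c / A) ^ 2"
      by (simp add: power2_eq_square)
    also have "\<dots> \<le> 256 * (c / A) ^ 2"
      by simp
    also have "\<dots> = (4 * sqrt (c / A)) ^ 4"
    proof -
      have "sqrt (c / A) ^ 4 = (sqrt (c / A) ^ 2) ^ 2"
        by (simp flip: power_mult)
      then show ?thesis
        using A_pos c_pos by (simp add: power_mult_distrib power2_eq_square)
    qed
    finally show ?thesis
      using power_le_imp_le_base[of "p a x" 3 "4 * sqrt (c / A)"] A_pos c_pos by simp
  qed
  then show ?thesis
    using a(1) by (auto simp: c_def)
qed

lemma exists_time_pmf_le_multiple: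
  assumes "4 * M \<le> int m"
  shows "\<exists>a. 2 * int a * M < int m \<and> (\<forall>x. p a x \<le> 12 * sqrt (real (card S) * M) / sqrt m)"
proof -
  define c where "c = real (card S)"
  have c_ge_1: "c \<ge> 1"
    using card_S_ge_1 by (simp add: c_def)
  text \<open>Choose \<open>A \<approx> m / 4M\<close>, so that the support of \<open>X\<^sub>a\<close> is shorter than \<open>m\<close> for \<open>a < 2A\<close>.\<close>
  obtain A where A_ge_1: "A \<ge> 1" and A: "4 * M * int A \<le> int m" "int m \<le> 8 * M * int A"
    using exists_nat_multiples_bracket[OF M_ge_1 assms] by blast
  have m_le: "real m \<le> 8 * M * A"
    using A(2) by (metis of_int_le_iff of_int_mult of_int_numeral of_int_of_nat_eq)
  obtain a where a: "A \<le> a" "a < 2 * A" "\<And>x. p a x \<le> 4 * sqrt (c / A)"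
    using exists_time_pmf_le[OF A_ge_1] unfolding c_def by blast
  have "16 * c * m \<le> 16 * c * (8 * M * A)"
    using m_le c_ge_1 by (intro mult_left_mono) auto
  also have "\<dots> \<le> 144 * (c * M) * A"
    using c_ge_1 M_ge_1 by simp
  finally have "16 * c * m \<le> 144 * (c * M) * A" .
  moreover have "real m > 0"
    using assms M_ge_1 by simp
  ultimately have "16 * (c / A) \<le> 144 * (c * M / m)"
    using A_ge_1 by (simp add: field_simps)
  then have "sqrt (16 * (c / A)) \<le> sqrt (144 * (c * M / m))"
    by simp
  then have "4 * sqrt (c / A) \<le> 12 * sqrt (c * M) / sqrt m"
    using real_sqrt_mult[of 16 "c / A"] by (simp add: real_sqrt_mult real_sqrt_divide)
  moreover have "2 * int a * M \<le> 2 * (2 * int A - 1) * M"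
    using a(2) M_ge_1 by (intro mult_right_mono) auto
  then have "2 * int a * M < int m"
    using A(1) M_ge_1 by (simp add: algebra_simps)
  ultimately show ?thesis
    using a(3) unfolding c_def by (meson order_trans)
qed

lemma prob_nonzero_multiple_le:
  assumes "m \<ge> 1"
  shows "measure_pmf.prob (lazy_walk S n) {x. int m dvd x \<and> x \<noteq> 0}
           \<le> 12 * sqrt (real (card S) * real_of_int M) / sqrt (real m)"
proof (cases "int m < 4 * M")
  case True
  have "sqrt m \<le> sqrt (4 * M)"
    using True by simp
  also have "\<dots> \<le> sqrt (144 * (real (card S) * M))"
    using card_S_ge_1 M_ge_1 by (intro real_sqrt_le_mono) (simp add: mult_left_mono)
  finally have "1 \<le> 12 * sqrt (real (card S) * M) / sqrt m"
    using assms by (simp add: real_sqrt_mult)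
  then show ?thesis
    using measure_pmf.prob_le_1[of "lazy_walk S n"] by (meson order_trans)
next
  case False
  then obtain a where "2 * int a * M < int m" "\<And>x. p a x \<le> 12 * sqrt (real (card S) * M) / sqrt m"
    using exists_time_pmf_le_multiple by force
  moreover have "0 \<le> 12 * sqrt (real (card S) * M) / sqrt m"
    using card_S_ge_1 M_ge_1 by simp
  ultimately show ?thesis
    by (rule prob_nonzero_multiple_le_pmf_bound)
qed

end

section \<open>Multiples of \<open>lcm(1, \<dots>, k)\<close>\<close>

lemma dvd_of_mult_eq_mult_diff:
  fixes a b c L :: int
  assumes "a dvd L" "b dvd L" "a * b = c * (b - a)" "a \<noteq> b"
  shows "c dvd L"
proof -
  obtain u v where u: "L = a * u" and v: "L = b * v"
    using assms(1,2) by blast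
  have "(b - a) * (c * (u - v)) = c * (b - a) * (u - v)"
    by (simp add: algebra_simps)
  also have "\<dots> = a * b * (u - v)"
    using assms(3) by simp
  also have "\<dots> = (b - a) * L"
    using u v by (simp add: algebra_simps)
  finally have "c * (u - v) = L"
    using assms(4) by simp
  then show ?thesis
    by (metis dvd_triv_left)
qed

text \<open>The identity \<open>1/c = 1/a - 1/b\<close>, i.e. the recursion for \<open>\<integral>\<^sub>0\<^sup>1 x\<^sup>k (1 - x)\<^sup>n\<^sup>-\<^sup>k dx = 1 / ((n + 1) (n choose k))\<close>.\<close>

lemma binomial_reciprocal_recurrence:
  assumes "k \<le> n"
  defines "a \<equiv> (n + 1) * (n choose k)" and "b \<equiv> (n + 2) * (Suc n choose k)"
    and "c \<equiv> (n + 2) * (Suc n choose Suc k)"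
  shows "a < b" and "int a * int b = int c * (int b - int a)"
proof -
  define P where "P = Suc n choose k"
  have a_eq: "a = (Suc n - k) * P"
    using binomial_absorb_comp[of "Suc n" k] by (simp add: a_def P_def)
  have "P > 0"
    using assms(1) by (simp add: P_def)
  have "a \<le> Suc n * P"
    unfolding a_eq by (intro mult_right_mono) auto
  also have "\<dots> < b"
    using \<open>P > 0\<close> by (simp add: b_def P_def)
  finally show "a < b" .
  have "b - a = (n + 2 - (Suc n - k)) * P"
    unfolding a_eq b_def P_def by (simp add: diff_mult_distrib)
  also have "n + 2 - (Suc n - k) = Suc k"
    using assms(1) by simp
  finally have "c * (b - a) = (n + 2) * P * (Suc k * (Suc n choose Suc k))"
    unfolding c_def by (simp only: mult_ac)
  also have "\<dots> = a * b"
    by (simp only: Suc_times_binomial) (simp add: a_def b_def P_def)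
  finally have "int (a * b) = int (c * (b - a))"
    by simp
  then show "int a * int b = int c * (int b - int a)"
    using \<open>a < b\<close> by (simp only: of_nat_mult of_nat_diff less_imp_le)
qed

lemma Suc_mult_binomial_dvd_Lcm:
  assumes "k \<le> n"
  shows "(n + 1) * (n choose k) dvd Lcm {1..n + 1}"
  using assms
proof (induction k arbitrary: n)
  case 0
  then show ?case by (simp add: dvd_Lcm)
next
  case (Suc k)
  then obtain n' where n: "n = Suc n'" and k: "k \<le> n'"
    by (cases n) auto
  define L where "L = Lcm {1..n' + 2}"
  have n'_plus_2: "n' + 2 = Suc n' + 1"
    by simp
  have "Lcm {1..n' + 1} dvd L"
    unfolding L_def by (intro Lcm_subset) auto
  then have "int ((n' + 1) * (n' choose k)) dvd int L"
    using Suc.IH[OF k] by (simp only: int_dvd_int_iff) (rule dvd_trans)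
  moreover have "int ((n' + 2) * (Suc n' choose k)) dvd int L"
    unfolding int_dvd_int_iff L_def n'_plus_2 by (rule Suc.IH) (use k in simp)
  moreover note binomial_reciprocal_recurrence(2)[OF k]
  moreover have "int ((n' + 1) * (n' choose k)) \<noteq> int ((n' + 2) * (Suc n' choose k))"
    using binomial_reciprocal_recurrence(1)[OF k]
    by (simp only: of_nat_eq_iff less_imp_neq not_False_eq_True)
  ultimately have "int ((n' + 2) * (Suc n' choose Suc k)) dvd int L"
    by (rule dvd_of_mult_eq_mult_diff)
  then show ?case
    unfolding int_dvd_int_iff L_def n'_plus_2 n .
qed

lemma two_pow_le_Lcm: "2 ^ n \<le> Lcm {1..n + 1::nat}"
proof -
  have "\<exists>k\<le>n. 2 ^ n \<le> (n + 1) * (n choose k)"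
  proof (rule ccontr)
    assume "\<not> ?thesis"
    then have "(\<Sum>k\<le>n. (n + 1) * (n choose k)) < (\<Sum>k\<le>n. 2 ^ n)"
      by (intro sum_strict_mono) auto
    then show False
      by (simp only: choose_row_sum flip: sum_distrib_left) simp
  qed
  then obtain k where k: "k \<le> n" "2 ^ n \<le> (n + 1) * (n choose k)"
    by blast
  moreover have "Lcm {1..n + 1::nat} \<noteq> 0"
    by (auto simp: Lcm_0_iff)
  ultimately show ?thesis
    using Suc_mult_binomial_dvd_Lcm[OF k(1)] by (meson dvd_imp_le le_trans not_gr0)
qed

lemma translate_multiples:
  fixes d x :: int
  shows "(\<lambda>h. x + h) ` {y. d dvd y} = {z. d dvd z - x}"
proof safe
  fix z
  assume "d dvd z - x"
  then show "z \<in> (\<lambda>h. x + h) ` {y. d dvd y}"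
    by (intro image_eqI[where x="z - x"]) auto
qed auto

lemma int_subgroup_multiples: "int_subgroup {x. d dvd x}"
  by (auto simp: int_subgroup_def)

lemma card_int_cosets_multiples:
  assumes "j \<ge> 1"
  shows "finite (int_cosets {x. int j dvd x}) \<and> card (int_cosets {x. int j dvd x}) \<le> j"
proof -
  have coset_mod: "{z. int j dvd z - x} = {z. int j dvd z - x mod int j}" for x
    by (simp flip: mod_eq_dvd_iff)
  then have "int_cosets {x. int j dvd x} = (\<lambda>r. {z. int j dvd z - r}) ` {0..<int j}"
    unfolding int_cosets_def translate_multiples
  proof (intro equalityI subsetI)
    fix A
    assume "A \<in> range (\<lambda>x. {z. int j dvd z - x})"
    then obtain x where "A = {z. int j dvd z - x mod int j}"
      using coset_mod by blast
    moreover have "x mod int j \<in> {0..<int j}"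
      using assms by simp
    ultimately show "A \<in> (\<lambda>r. {z. int j dvd z - r}) ` {0..<int j}"
      by blast
  qed auto
  then show ?thesis
    using card_image_le[of "{0..<int j}" "\<lambda>r. {z. int j dvd z - r}"] by simp
qed

lemma Lambda_int_subset_multiples:
  assumes "1 \<le> j" "j \<le> k"
  shows "Lambda_int k \<subseteq> {x. int j dvd x}"
proof -
  have "{x. int j dvd x} \<in> {H. int_subgroup H \<and> finite (int_cosets H) \<and> card (int_cosets H) \<le> k}"
    using assms int_subgroup_multiples card_int_cosets_multiples[of j] by auto
  then show ?thesis
    unfolding Lambda_int_def by blast
qed

lemma Lambda_int_subset_multiples_Lcm: "Lambda_int k \<subseteq> {x. int (Lcm {1..k}) dvd x}"
proof
  fix x
  assume "x \<in> Lambda_int k"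
  then have "int j dvd x" if "j \<in> {1..k}" for j
    using Lambda_int_subset_multiples[of j k] that by auto
  then have "Lcm {1..k} dvd nat \<bar>x\<bar>"
    by (intro Lcm_least) simp
  then show "x \<in> {x. int (Lcm {1..k}) dvd x}"
    by simp
qed

lemma int_generates_obtains_not_in:
  assumes "int_generates S" "int_subgroup H" "H \<noteq> UNIV"
  obtains s where "s \<in> S" "s \<notin> H"
  using assms unfolding int_generates_def by blast

text \<open>A bound \<open>C e\<^sup>-\<^sup>a\<^sup>k\<close> takes over from the uniform bound \<open>1 - \<theta>\<close> once \<open>k\<close> is large.\<close>

lemma exists_exp_bound:
  fixes a C \<theta> :: real
  assumes "a > 0" "\<theta> > 0"
  shows "\<exists>c>0. \<forall>k::nat. \<forall>x. x \<le> C * exp (- a * k) \<longrightarrow> x \<le> 1 - \<theta> \<longrightarrow> x \<le> exp (- c * k)"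
proof -
  define C' where "C' = max C 1"
  define K where "K = 2 * ln C' / a + 1"
  define c where "c = min (a / 2) (\<theta> / K)"
  have "C' \<ge> 1"
    by (simp add: C'_def)
  then have "K > 0"
    using assms by (simp add: K_def add_nonneg_pos)
  have c_le: "c \<le> a / 2" "c \<le> \<theta> / K"
    unfolding c_def by (rule min.cobounded1, rule min.cobounded2)
  have "c > 0"
    using assms \<open>K > 0\<close> by (simp add: c_def)
  moreover have "x \<le> exp (- c * k)" if "x \<le> C * exp (- a * k)" "x \<le> 1 - \<theta>" for k :: nat and x
  proof (cases "k \<ge> K")
    case True
    then have "ln C' \<le> a * k / 2"
      using assms by (simp add: K_def field_simps)
    moreover have "c * k \<le> a / 2 * k"
      using c_le by (intro mult_right_mono) auto
    ultimately have "ln C' + - a * k \<le> - c * k"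
      by linarith
    moreover have "C' * exp (- a * k) = exp (ln C' + - a * k)"
      using \<open>C' \<ge> 1\<close> by (simp only: exp_add exp_ln_iff) simp
    ultimately have "C' * exp (- a * k) \<le> exp (- c * k)"
      by simp
    moreover have "C * exp (- a * k) \<le> C' * exp (- a * k)"
      by (intro mult_right_mono) (auto simp: C'_def)
    ultimately show ?thesis
      using that(1) by linarith
  next
    case False
    have "c * k \<le> \<theta> / K * k"
      using c_le by (intro mult_right_mono) auto
    also have "\<dots> \<le> \<theta>"
      using False \<open>K > 0\<close> assms by (simp add: field_simps)
    finally have "exp (- \<theta>) \<le> exp (- c * k)"
      by simp
    moreover have "1 - \<theta> \<le> exp (- \<theta>)"
      using exp_ge_add_one_self[of "- \<theta>"] by simp
    ultimately show ?thesis
      using that(2) by linarith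
  qed
  ultimately show ?thesis
    by blast
qed

lemma divide_sqrt_two_pow:
  fixes C :: real
  assumes "k \<ge> 1"
  shows "C / sqrt (2 ^ (k - 1)) = C * exp (ln 2 / 2) * exp (- (ln 2 / 2) * k)"
proof -
  have "sqrt (2 ^ (k - 1)) = exp (ln 2 / 2 * (k - 1))"
    by (simp add: powr_half_sqrt[symmetric] powr_realpow[symmetric] powr_powr powr_def)
  also have "\<dots> = exp (ln 2 / 2 * k) / exp (ln 2 / 2)"
    using assms by (simp add: of_nat_diff right_diff_distrib exp_diff)
  finally show ?thesis
    by (simp add: exp_minus field_simps)
qed

context nontrivial_bounded_lazy_walk
begin

lemma prob_Lambda_int_le:
  assumes "k \<ge> 1"
  shows "measure_pmf.prob (lazy_walk S n) (Lambda_int k - {0})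
           \<le> 12 * sqrt (real (card S) * real_of_int M) / sqrt (2 ^ (k - 1))"
proof -
  define L where "L = Lcm {1..k}"
  define C where "C = 12 * sqrt (real (card S) * real_of_int M)"
  have L_ge: "2 ^ (k - 1) \<le> L"
    using two_pow_le_Lcm[of "k - 1"] assms unfolding L_def by (simp only: le_add_diff_inverse2)
  moreover have "(1::nat) \<le> 2 ^ (k - 1)"
    by simp
  ultimately have "L \<ge> 1"
    by linarith
  have "measure_pmf.prob (lazy_walk S n) (Lambda_int k - {0})
          \<le> measure_pmf.prob (lazy_walk S n) {x. int L dvd x \<and> x \<noteq> 0}"
    unfolding L_def
    by (rule measure_pmf.finite_measure_mono) (use Lambda_int_subset_multiples_Lcm[of k] in blast, simp)
  also have "\<dots> \<le> C / sqrt L"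
    using prob_nonzero_multiple_le[OF \<open>L \<ge> 1\<close>] by (simp add: C_def)
  also have "\<dots> \<le> C / sqrt (2 ^ (k - 1))"
  proof (rule divide_left_mono)
    have "real (2 ^ (k - 1)) \<le> real L"
      using L_ge by (simp only: of_nat_le_iff)
    then show "sqrt (2 ^ (k - 1)) \<le> sqrt L"
      by simp
    show "0 \<le> C"
      using card_S_ge_1 M_ge_1 by (simp add: C_def)
    show "0 < sqrt L * sqrt (2 ^ (k - 1))"
      using \<open>L \<ge> 1\<close> by simp
  qed
  finally show ?thesis
    unfolding C_def .
qed

lemma exists_sqrt_bound_nonzero_multiple:
  "\<exists>C>0. \<forall>m::nat. m \<ge> 1 \<longrightarrow> (\<forall>n.
     measure_pmf.prob (lazy_walk S n) {x. int m dvd x \<and> x \<noteq> 0} \<le> C / sqrt (real m))"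
proof -
  have "12 * sqrt (real (card S) * real_of_int M) > 0"
    using card_S_ge_1 M_ge_1 by simp
  then show ?thesis
    using prob_nonzero_multiple_le by blast
qed

lemma exists_exp_bound_Lambda_int:
  assumes "s\<^sub>1 \<in> S" "odd s\<^sub>1"
  shows "\<exists>c>0. \<forall>k::nat. k \<ge> 2 \<longrightarrow> (\<forall>n.
           measure_pmf.prob (lazy_walk S n) (Lambda_int k - {0}) \<le> exp (- c * real k))"
proof -
  define C where "C = 12 * sqrt (real (card S) * real_of_int M)"
  obtain c :: real where "c > 0" and c: "\<And>(k::nat) x. x \<le> C * exp (ln 2 / 2) * exp (- (ln 2 / 2) * k)
      \<Longrightarrow> x \<le> 1 - 1 / (2 * card S) \<Longrightarrow> x \<le> exp (- c * k)"
    using exists_exp_bound[of "ln 2 / 2" "1 / (2 * card S)" "C * exp (ln 2 / 2)"] card_S_ge_1 by auto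
  have "measure_pmf.prob (lazy_walk S n) (Lambda_int k - {0}) \<le> exp (- c * k)"
    if "k \<ge> 2" for k n
  proof (rule c)
    show "measure_pmf.prob (lazy_walk S n) (Lambda_int k - {0}) \<le> C * exp (ln 2 / 2) * exp (- (ln 2 / 2) * k)"
      using prob_Lambda_int_le[of k n] divide_sqrt_two_pow[of k C] that by (simp add: C_def)
    have "Lambda_int k - {0} \<subseteq> {x. even x \<and> x \<noteq> 0}"
      using Lambda_int_subset_multiples[of 2 k] that by auto
    then have "measure_pmf.prob (lazy_walk S n) (Lambda_int k - {0})
                 \<le> measure_pmf.prob (lazy_walk S n) {x. even x \<and> x \<noteq> 0}"
      by (rule measure_pmf.finite_measure_mono) simp
    then show "measure_pmf.prob (lazy_walk S n) (Lambda_int k - {0}) \<le> 1 - 1 / (2 * card S)"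
      using prob_nonzero_even_le[OF assms, of n] by linarith
  qed
  then show ?thesis
    using \<open>c > 0\<close> by blast
qed

end

theorem lemma4p4:
  fixes S :: "int set"
  assumes "finite S" and "uminus ` S = S" and "int_generates S"
  shows "(\<exists>C>0. \<forall>m::nat. m \<ge> 1 \<longrightarrow> (\<forall>n.
            measure_pmf.prob (lazy_walk S n) {x. int m dvd x \<and> x \<noteq> 0} \<le> C / sqrt (real m)))
       \<and> (\<exists>c>0. \<forall>k::nat. k \<ge> 2 \<longrightarrow> (\<forall>n.
            measure_pmf.prob (lazy_walk S n) (Lambda_int k - {0}) \<le> exp (- c * real k)))"
proof -
  have "{0::int} \<noteq> UNIV"
    by (metis UNIV_I singletonD zero_neq_one)
  then obtain s\<^sub>0 where s\<^sub>0: "s\<^sub>0 \<in> S" "s\<^sub>0 \<noteq> 0"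
    using int_generates_obtains_not_in[OF assms(3), of "{0}"] by (auto simp: int_subgroup_def)
  have "{x::int. 2 dvd x} \<noteq> UNIV"
    by (metis UNIV_I mem_Collect_eq odd_one)
  then obtain s\<^sub>1 where s\<^sub>1: "s\<^sub>1 \<in> S" "odd s\<^sub>1"
    using int_generates_obtains_not_in[OF assms(3) int_subgroup_multiples] by auto
  have "- s\<^sub>0 \<in> S"
    using imageI[OF s\<^sub>0(1), of uminus] assms(2) by simp
  then interpret nontrivial_bounded_lazy_walk S "Max (abs ` S)" "\<bar>s\<^sub>0\<bar>"
    using assms(1) s\<^sub>0 by unfold_locales (auto simp: abs_if)
  show ?thesis
    using exists_sqrt_bound_nonzero_multiple exists_exp_bound_Lambda_int[OF s\<^sub>1] by blast
qed

end
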